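(* For every signed permutation $\pi\in\mathfrak{B}_n$, \[\mathfrak{d}_B(\pi)=2^{\operatorname{pe}_B(\pi)+\varsigma(\pi)}\sum_{\substack{D\subseteq\{0,1,\dots,n-1\}\\ \operatorname{Pe}_B(\pi)\subseteq D\,\triangle\,(D+1)\\ \pi(1)<0\ \Rightarrow\ 0\in D}}L_D,\] where $D+1=\{d+1:d\in D\}$ and $\triangle$ is symmetric difference.
   Context: $\mathfrak{B}_n$ is the group of signed permutations (bijections $\pi$ of $\{-n,\dots,n\}$ with $\pi(-i)=-\pi(i)$), written as words, with $\pi(0)=0$. $\operatorname{Pe}_B(\pi)$ is the set of $i\in\{1,\dots,n-1\}$ with $\pi(i-1)<\pi(i)>\pi(i+1)$, $\operatorname{pe}_B(\pi)=|\operatorname{Pe}_B(\pi)|$, and $\varsigma(\pi)$ is $0$ if $\pi(1)>0$ and $1$ if $\pi(1)<0$. Work in formal power series in commuting variables $z_0,z_1,\dots$. For $E=\{e_1<\dots<e_m\}\subseteq\{0,\dots,n-1\}$ put $e_{m+1}=n$ and $N_E=\sum_{0<i_1<\dots<i_m}z_0^{e_1}\prod_{r=1}^m z_{i_r}^{e_{r+1}-e_r}$ (so $N_\emptyset=z_0^n$), and $L_D=\sum_{D\subseteq T\subseteq\{0,\dots,n-1\}}N_T$. Let $Z$ be the totally ordered set $0<\bar1<1<\bar2<2<\cdots$, with $0$ and unbarred $j$ "plus-type" and barred $\bar j$ "minus-type", and $|0|=0$, $|\bar j|=|j|=j$. Define $\mathfrak{d}_B(\pi)=\sum\prod_{s=1}^n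 z_{|a_s|}$, summed over all sequences $(a_1,\dots,a_n)\in Z^n$ such that, with $a_0=0$, $a_0\le a_1\le\dots\le a_n$ and for each $s\in\{0,\dots,n-1\}$: if $\pi(s)<\pi(s+1)$ then $a_s<a_{s+1}$ or ($a_s=a_{s+1}$ is plus-type); if $\pi(s)>\pi(s+1)$ then $a_s<a_{s+1}$ or ($a_s=a_{s+1}$ is minus-type). *)

theory Defs
  imports Main "HOL-Library.Multiset"
begin

definition signed_perm :: "nat \<Rightarrow> (int \<Rightarrow> int) \<Rightarrow> bool" where
  "signed_perm n \<pi> \<longleftrightarrow> bij_betw \<pi> {- int n..int n} {- int n..int n} \<and> (\<forall>i. \<pi> (- i) = - \<pi> i)"

definition PeB :: "nat \<Rightarrow> (int \<Rightarrow> int) \<Rightarrow> nat set" where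
  "PeB n \<pi> = {i \<in> {1..n-1}. \<pi> (int i - 1) < \<pi> (int i) \<and> \<pi> (int i) > \<pi> (int i + 1)}"

definition peB :: "nat \<Rightarrow> (int \<Rightarrow> int) \<Rightarrow> nat" where
  "peB n \<pi> = card (PeB n \<pi>)"

definition varsigma :: "(int \<Rightarrow> int) \<Rightarrow> nat" where
  "varsigma \<pi> = (if \<pi> 1 < 0 then 1 else 0)"

(* Formal power series in commuting variables z_0, z_1, ... are represented by
   their coefficient functions: a monomial  prod_j z_j^(k_j)  is the multiset of
   variable indices in which j has multiplicity k_j. *)
type_synonym monomial = "nat multiset"

(* The totally ordered set Z = 0 < bar1 < 1 < bar2 < 2 < ... is encoded in nat
   order-preservingly: 0 |-> 0, bar j |-> 2j-1, j |-> 2j.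
   Plus-type elements (0 and unbarred j) are the even codes, minus-type (bar j) the odd ones;
   |a| is recovered as (a+1) div 2. *)
definition zabs :: "nat \<Rightarrow> nat" where "zabs a = (a + 1) div 2"
definition plus_type :: "nat \<Rightarrow> bool" where "plus_type a \<longleftrightarrow> even a"
definition minus_type :: "nat \<Rightarrow> bool" where "minus_type a \<longleftrightarrow> odd a"

(* admissible sequences (a_1,...,a_n) in Z^n for d_B(pi); the list a is (a_1..a_n), a_0 = 0 *)
definition dB_seqs :: "nat \<Rightarrow> (int \<Rightarrow> int) \<Rightarrow> nat list set" where
  "dB_seqs n \<pi> = {a. length a = n \<and>
     (let b = 0 # a in
      (\<forall>s<n. b ! s \<le> b ! (s+1)) \<and>
      (\<forall>s<n. \<pi> (int s) < \<pi> (int s + 1) \<longrightarrow>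
               (b ! s < b ! (s+1) \<or> (b ! s = b ! (s+1) \<and> plus_type (b ! s)))) \<and>
      (\<forall>s<n. \<pi> (int s) > \<pi> (int s + 1) \<longrightarrow>
               (b ! s < b ! (s+1) \<or> (b ! s = b ! (s+1) \<and> minus_type (b ! s)))))}"

definition dB_coef :: "nat \<Rightarrow> (int \<Rightarrow> int) \<Rightarrow> monomial \<Rightarrow> nat" where
  "dB_coef n \<pi> M = card {a \<in> dB_seqs n \<pi>. mset (map zabs a) = M}"

definition N_mono :: "nat \<Rightarrow> nat set \<Rightarrow> nat list \<Rightarrow> monomial" where
  "N_mono n E is = (let es = sorted_list_of_set E; ends = es @ [n] in
      replicate_mset (hd ends) 0 +
      (\<Sum>r<length es. replicate_mset (ends ! (r+1) - ends ! r) (is ! r)))"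

definition N_coef :: "nat \<Rightarrow> nat set \<Rightarrow> monomial \<Rightarrow> nat" where
  "N_coef n E M = card {is. length is = card E \<and> sorted_wrt (<) is \<and> (\<forall>i\<in>set is. 0 < i)
                          \<and> N_mono n E is = M}"

definition L_coef :: "nat \<Rightarrow> nat set \<Rightarrow> monomial \<Rightarrow> nat" where
  "L_coef n D M = (\<Sum>T \<in> {T. D \<subseteq> T \<and> T \<subseteq> {0..<n}}. N_coef n T M)"

definition symdiff :: "'a set \<Rightarrow> 'a set \<Rightarrow> 'a set" where
  "symdiff A B = (A - B) \<union> (B - A)"

end

theory Submission
  imports Defs
begin

text \<open>
  Both sides vanish at monomials of degree other than n. At any other monomial M = mset c with
  c sorted, let J be the set of positions where 0 # c strictly increases. The coefficient of N_T
  at M is [T = J], so the sum on the right counts the D \<subseteq> J that meet each pair {i - 1, i}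
  of a peak i, and {0} if \<pi>(1) < 0, in an odd number of elements. Peaks are never adjacent, so
  these constraint sets are pairwise disjoint, and toggling one element of each halves the
  count; hence the right-hand side is 2^|J| if every constraint set meets J, and 0 otherwise.

  On the left, a sequence a with |a| = c splits along the blocks of equal entries of c. A block
  of value v > 0 is filled by barred v's followed by unbarred ones; the cut between them has
  exactly two admissible positions if the steps inside the block contain no peak, and none
  otherwise, while the block of zeros admits only ascents. There is one positive block per
  element of J, and a peak or initial descent fails to touch J exactly when it lies inside a
  block, so the left-hand side is 2^|J| under the same condition and 0 otherwise.
\<close>

section \<open>Subsets with prescribed parities\<close>

lemma card_involution_halves:
  assumes "finite A" and "f ` A \<subseteq> A" and "\<And>x. x \<in> A \<Longrightarrow> f (f x) = x"
    and "\<And>x. x \<in> A \<Longrightarrow> R (f x) \<longleftrightarrow> \<not> R x"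
  shows "2 * card {x \<in> A. R x} = card A"
proof -
  have "f ` {x \<in> A. R x} = {x \<in> A. \<not> R x}"
  proof (intro equalityI subsetI)
    fix y assume "y \<in> f ` {x \<in> A. R x}"
    then show "y \<in> {x \<in> A. \<not> R x}" using assms(2,4) by auto
  next
    fix y assume y: "y \<in> {x \<in> A. \<not> R x}"
    then have "f y \<in> {x \<in> A. R x}" using assms(2,4) by auto
    then show "y \<in> f ` {x \<in> A. R x}" using assms(3) y by (metis image_eqI mem_Collect_eq)
  qed
  moreover have "inj_on f {x \<in> A. R x}"
    by (rule inj_on_inverseI[where g = f]) (use assms(3) in auto)
  ultimately have "card {x \<in> A. \<not> R x} = card {x \<in> A. R x}"
    by (metis card_image)
  moreover have "card A = card {x \<in> A. R x} + card {x \<in> A. \<not> R x}"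
    using assms(1) by (subst card_Un_disjoint[symmetric]) (auto intro: arg_cong[where f = card])
  ultimately show ?thesis by simp
qed

lemma odd_card_symdiff_singleton:
  assumes "finite D" and "e \<in> S"
  shows "odd (card (symdiff D {e} \<inter> S)) \<longleftrightarrow> \<not> odd (card (D \<inter> S))"
proof (cases "e \<in> D")
  case True
  then have "symdiff D {e} \<inter> S = (D \<inter> S) - {e}" and "e \<in> D \<inter> S"
    and "0 < card (D \<inter> S)"
    using assms by (auto simp: symdiff_def card_gt_0_iff)
  then show ?thesis by simp
next
  case False
  then have "symdiff D {e} \<inter> S = insert e (D \<inter> S)" and "e \<notin> D \<inter> S"
    using assms(2) by (auto simp: symdiff_def)
  then show ?thesis using assms(1) by simp
qed

lemma card_subsets_odd_toggle:
  assumes "finite T" and "e \<in> S" and "e \<in> T" and "\<forall>S' \<in> \<S>. e \<notin> S'"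
  shows "2 * card {D. D \<subseteq> T \<and> (\<forall>S'\<in>\<S>. odd (card (D \<inter> S'))) \<and> odd (card (D \<inter> S))}
    = card {D. D \<subseteq> T \<and> (\<forall>S'\<in>\<S>. odd (card (D \<inter> S')))}"
proof -
  let ?A = "{D. D \<subseteq> T \<and> (\<forall>S'\<in>\<S>. odd (card (D \<inter> S')))}"
  have "finite ?A" by (rule finite_subset[of _ "Pow T"]) (use assms(1) in auto)
  then have "2 * card {D \<in> ?A. odd (card (D \<inter> S))} = card ?A"
  proof (rule card_involution_halves[where f = "\<lambda>D. symdiff D {e}"])
    fix D assume "D \<in> ?A"
    then have "finite D" using assms(1) finite_subset by auto
    show "symdiff (symdiff D {e}) {e} = D" by (auto simp: symdiff_def)
    show "odd (card (symdiff D {e} \<inter> S)) \<longleftrightarrow> \<not> odd (card (D \<inter> S))"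
      using \<open>finite D\<close> assms(2) by (rule odd_card_symdiff_singleton)
  next
    show "(\<lambda>D. symdiff D {e}) ` ?A \<subseteq> ?A"
    proof (rule image_subsetI)
      fix D assume D: "D \<in> ?A"
      have "symdiff D {e} \<inter> S' = D \<inter> S'" if "S' \<in> \<S>" for S'
        using assms(4) that by (auto simp: symdiff_def)
      moreover have "symdiff D {e} \<subseteq> T"
        using assms(3) D by (auto simp: symdiff_def)
      ultimately show "symdiff D {e} \<in> ?A" using D by simp
    qed
  qed
  then show ?thesis by (simp add: conj_assoc)
qed

lemma card_subsets_odd_intersections:
  assumes "finite T" and "finite \<S>" and "pairwise disjnt \<S>"
  shows "2 ^ card \<S> * card {D. D \<subseteq> T \<and> (\<forall>S\<in>\<S>. odd (card (D \<inter> S)))}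
    = (if \<forall>S\<in>\<S>. S \<inter> T \<noteq> {} then 2 ^ card T else 0)"
  using assms(2,3)
proof (induction \<S> rule: finite_induct)
  case empty
  have "{D. D \<subseteq> T \<and> (\<forall>S\<in>{}. odd (card (D \<inter> S)))} = Pow T" by auto
  then show ?case using assms(1) by (simp add: card_Pow)
next
  case (insert S \<S>)
  let ?Q = "\<lambda>D. D \<subseteq> T \<and> (\<forall>S\<in>\<S>. odd (card (D \<inter> S)))"
  have IH: "2 ^ card \<S> * card {D. ?Q D} = (if \<forall>S\<in>\<S>. S \<inter> T \<noteq> {} then 2 ^ card T else 0)"
    using insert.IH insert.prems by (simp add: pairwise_insert)
  have split: "{D. D \<subseteq> T \<and> (\<forall>S'\<in>insert S \<S>. odd (card (D \<inter> S')))}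
      = {D. ?Q D \<and> odd (card (D \<inter> S))}" by auto
  show ?case
  proof (cases "S \<inter> T = {}")
    case True
    then have "D \<inter> S = {}" if "D \<subseteq> T" for D using that by blast
    then have none: "{D. ?Q D \<and> odd (card (D \<inter> S))} = {}" by auto
    have "\<not> (\<forall>S'\<in>insert S \<S>. S' \<inter> T \<noteq> {})" using True by blast
    then show ?thesis unfolding split none by (simp only: card.empty mult_0_right if_False)
  next
    case False
    then obtain e where e: "e \<in> S" "e \<in> T" by blast
    have "disjnt S S'" if "S' \<in> \<S>" for S'
      using insert.prems insert.hyps(2) that unfolding pairwise_def by (metis insertCI)
    then have "\<forall>S' \<in> \<S>. e \<notin> S'" using e(1) by (auto simp: disjnt_def)
    then have "2 ^ card (insert S \<S>) * card {D. ?Q D \<and> odd (card (D \<inter> S))}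
        = 2 ^ card \<S> * card {D. ?Q D}"
      using card_subsets_odd_toggle[OF assms(1) e] insert.hyps by (simp add: mult.assoc)
    moreover have "(\<forall>S'\<in>insert S \<S>. S' \<inter> T \<noteq> {}) \<longleftrightarrow> (\<forall>S'\<in>\<S>. S' \<inter> T \<noteq> {})"
      using False by blast
    ultimately show ?thesis unfolding split IH by presburger
  qed
qed

section \<open>The monomials N_T\<close>

definition rank :: "nat set \<Rightarrow> nat \<Rightarrow> nat" where
  "rank T p = card {e \<in> T. e < p}"

lemma rank_0 [simp]: "rank T 0 = 0"
  by (simp add: rank_def)

lemma rank_Suc: "rank T (Suc p) = rank T p + of_bool (p \<in> T)"
proof (cases "p \<in> T")
  case True
  then have "{e \<in> T. e < Suc p} = insert p {e \<in> T. e < p}" by auto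
  then show ?thesis using True by (simp add: rank_def)
next
  case False
  then have "{e \<in> T. e < Suc p} = {e \<in> T. e < p}" using less_Suc_eq by auto
  then show ?thesis using False by (simp add: rank_def)
qed

lemma rank_mono: "p \<le> q \<Longrightarrow> rank T p \<le> rank T q"
  unfolding rank_def by (rule card_mono) auto

lemma rank_le_card: "finite T \<Longrightarrow> rank T p \<le> card T"
  unfolding rank_def by (rule card_mono) auto

lemma rank_less_card: "finite T \<Longrightarrow> p \<in> T \<Longrightarrow> rank T p < card T"
  unfolding rank_def by (rule psubset_card_mono) auto

lemma rank_strict_mono: "x \<in> T \<Longrightarrow> x < y \<Longrightarrow> rank T x < rank T y"
  using rank_Suc[of T x] rank_mono[of "Suc x" y T] by simp

lemma bij_betw_rank: "finite T \<Longrightarrow> bij_betw (rank T) T {..<card T}"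
proof (rule bij_betw_imageI)
  show inj: "inj_on (rank T) T"
    by (rule inj_onI) (metis linorder_neqE_nat rank_strict_mono less_irrefl)
  assume "finite T"
  then have "rank T ` T \<subseteq> {..<card T}" by (auto intro: rank_less_card)
  moreover have "card (rank T ` T) = card {..<card T}" using card_image[OF inj] by simp
  ultimately show "rank T ` T = {..<card T}" by (intro card_subset_eq) auto
qed

definition jumps :: "nat list \<Rightarrow> nat set" where
  "jumps c = {s. s < length c \<and> (0 # c) ! s < c ! s}"

lemma jumps_subset: "jumps c \<subseteq> {..<length c}"
  by (auto simp: jumps_def)

lemma finite_jumps: "finite (jumps c)"
  using jumps_subset finite_subset by blast

definition staircase :: "nat \<Rightarrow> nat set \<Rightarrow> nat list \<Rightarrow> nat list" where
  "staircase n T is = map (\<lambda>p. (0 # is) ! rank T p) [1..<Suc n]"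

lemma length_staircase [simp]: "length (staircase n T is) = n"
  by (simp add: staircase_def)

lemma nth_Cons_staircase: "p \<le> n \<Longrightarrow> (0 # staircase n T is) ! p = (0 # is) ! rank T p"
  by (cases p) (simp_all add: staircase_def del: upt_Suc)

lemma staircase_insert_max:
  assumes "finite A" and "\<forall>a\<in>A. a < b" and "b \<le> n"
  shows "staircase n (insert b A) is = staircase b A is @ replicate (n - b) (is ! card A)"
proof -
  have split: "[1..<Suc n] = [1..<Suc b] @ [Suc b..<Suc n]"
    using assms(3) upt_add_eq_append[of 1 "Suc b" "n - b"] by simp
  have "rank (insert b A) p = rank A p" if "p \<le> b" for p
    using that unfolding rank_def by (metis (lifting) insert_iff leD mem_Collect_eq)
  then have low: "map (\<lambda>p. (0 # is) ! rank (insert b A) p) [1..<Suc b]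
      = map (\<lambda>p. (0 # is) ! rank A p) [1..<Suc b]"
    by (intro map_cong) auto
  have "rank (insert b A) p = Suc (card A)" if "b < p" for p
  proof -
    have "{e \<in> insert b A. e < p} = insert b A" and "b \<notin> A" using assms(2) that by auto
    then show ?thesis using assms(1) by (simp add: rank_def)
  qed
  then have "map (\<lambda>p. (0 # is) ! rank (insert b A) p) [Suc b..<Suc n]
      = map (\<lambda>_. is ! card A) [Suc b..<Suc n]"
    by (intro map_cong) auto
  then have high: "map (\<lambda>p. (0 # is) ! rank (insert b A) p) [Suc b..<Suc n]
      = replicate (n - b) (is ! card A)"
    by (simp add: map_replicate_const del: upt_Suc)
  show ?thesis unfolding staircase_def split map_append low high ..
qed

lemma sorted_list_of_set_insert_max:
  assumes "finite A" and "\<forall>a\<in>A. a < b"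
  shows "sorted_list_of_set (insert b A) = sorted_list_of_set A @ [b]"
proof -
  have "b \<notin> A" using assms(2) by blast
  then show ?thesis
    using assms by (subst sorted_list_of_set_unique[symmetric]) (auto simp: sorted_wrt_append)
qed

lemma N_mono_insert_max:
  assumes "finite A" and "\<forall>a\<in>A. a < b"
  shows "N_mono n (insert b A) is = N_mono b A is + replicate_mset (n - b) (is ! card A)"
proof -
  define xs where "xs = sorted_list_of_set A"
  have len: "length xs = card A" using assms(1) by (simp add: xs_def)
  have hd: "hd ((xs @ [b]) @ [n]) = hd (xs @ [b])" by (cases xs) auto
  have sum: "(\<Sum>r<length xs. replicate_mset (((xs @ [b]) @ [n]) ! (r + 1) - ((xs @ [b]) @ [n]) ! r) (is ! r))
      = (\<Sum>r<length xs. replicate_mset ((xs @ [b]) ! (r + 1) - (xs @ [b]) ! r) (is ! r))"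
    by (intro sum.cong refl) (simp add: nth_append)
  have last: "((xs @ [b]) @ [n]) ! (length xs + 1) = n" "((xs @ [b]) @ [n]) ! length xs = b"
    by (simp_all add: nth_append)
  show ?thesis
    unfolding N_mono_def Let_def sorted_list_of_set_insert_max[OF assms] xs_def[symmetric]
      length_append_singleton sum.lessThan_Suc hd sum last using len by (simp add: add.assoc)
qed

lemma N_mono_eq_mset_staircase:
  assumes "finite T" and "T \<subseteq> {..<n}"
  shows "N_mono n T is = mset (staircase n T is)"
  using assms
proof (induction T arbitrary: n rule: finite_linorder_max_induct)
  case empty
  have "staircase n {} is = replicate n 0"
    by (simp add: staircase_def rank_def map_replicate_const del: upt_Suc)
  then show ?case by (simp add: N_mono_def)
next
  case (insert b A)
  then have "b < n" and "A \<subseteq> {..<b}" by auto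
  then show ?case
    using insert by (simp add: N_mono_insert_max staircase_insert_max)
qed

lemma sorted_staircase:
  assumes "finite T" and "length is = card T" and "sorted (0 # is)"
  shows "sorted (staircase n T is)"
  unfolding staircase_def
proof (rule sorted_map_mono)
  show "mono_on (set [1..<Suc n]) (\<lambda>p. (0 # is) ! rank T p)"
    using assms rank_le_card[OF assms(1)]
    by (intro mono_onI sorted_nth_mono rank_mono) (auto simp: less_Suc_eq_le)
qed (rule sorted_upt)

lemma jumps_staircase:
  assumes "T \<subseteq> {..<n}" and "length is = card T" and "sorted_wrt (<) (0 # is)"
  shows "jumps (staircase n T is) = T"
proof -
  have fin: "finite T" using assms(1) finite_subset by blast
  have "(0 # is) ! rank T s < (0 # is) ! rank T (Suc s) \<longleftrightarrow> s \<in> T" for s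
  proof (cases "s \<in> T")
    case True
    then have "rank T s < length is" using assms(2) rank_less_card[OF fin] by simp
    then have "(0 # is) ! rank T s < (0 # is) ! Suc (rank T s)"
      by (intro sorted_wrt_nth_less[OF assms(3)]) simp_all
    then show ?thesis using True by (simp add: rank_Suc del: nth_Cons_Suc)
  qed (simp add: rank_Suc)
  moreover have "staircase n T is ! s = (0 # is) ! rank T (Suc s)" if "s < n" for s
    using nth_Cons_staircase[of "Suc s" n T "is"] that by simp
  ultimately show ?thesis
    using assms(1) by (auto simp: jumps_def nth_Cons_staircase)
qed

lemma staircase_inj:
  assumes "T \<subseteq> {..<n}"
    and "length is = card T" and "length is' = card T"
    and "staircase n T is = staircase n T is'"
  shows "is = is'"
proof (rule nth_equalityI)
  show "length is = length is'" using assms(2,3) by simp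
  fix r assume "r < length is"
  then have "r \<in> {..<card T}" using assms(2) by simp
  moreover have fin: "finite T" using assms(1) finite_subset by blast
  ultimately obtain x where x: "x \<in> T" "rank T x = r"
    using bij_betw_rank[OF fin] by (metis bij_betw_iff_bijections)
  then have "Suc x \<le> n" using assms(1) by auto
  then have "(0 # staircase n T ks) ! Suc x = (0 # ks) ! Suc r" for ks
    using nth_Cons_staircase[of "Suc x" n T ks] x by (simp add: rank_Suc)
  then show "is ! r = is' ! r" using assms(4) by (metis nth_Cons_Suc)
qed

lemma jumps_strict_mono:
  assumes "sorted c" and "x \<in> jumps c" and "y \<in> jumps c" and "x < y"
  shows "c ! x < c ! y"
proof -
  have "sorted (0 # c)" and "y < length c" using assms(1,3) by (simp_all add: jumps_def)
  then have "(0 # c) ! Suc x \<le> (0 # c) ! y" using assms(4) by (intro sorted_nth_mono) auto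
  then show ?thesis using assms(3) by (simp add: jumps_def)
qed

text \<open>Here the_inv_into T (rank T) r is the r-th smallest element of T.\<close>

definition jump_values :: "nat list \<Rightarrow> nat list" where
  "jump_values c = map (\<lambda>r. c ! the_inv_into (jumps c) (rank (jumps c)) r) [0..<card (jumps c)]"

lemma length_jump_values [simp]: "length (jump_values c) = card (jumps c)"
  by (simp add: jump_values_def)

lemma nth_jump_values_rank: "x \<in> jumps c \<Longrightarrow> jump_values c ! rank (jumps c) x = c ! x"
  using bij_betw_rank[OF finite_jumps] rank_less_card[OF finite_jumps]
  by (simp add: jump_values_def bij_betw_def the_inv_into_f_f)

lemma sorted_jump_values:
  assumes "sorted c"
  shows "sorted_wrt (<) (0 # jump_values c)"
proof -
  let ?T = "jumps c"
  have "\<exists>x \<in> ?T. rank ?T x = r" if "r < card ?T" for r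
    using that bij_betw_rank[OF finite_jumps] by (metis bij_betw_iff_bijections lessThan_iff)
  then have some_jump: "\<exists>x \<in> ?T. rank ?T x = r \<and> jump_values c ! r = c ! x" if "r < card ?T" for r
    using that nth_jump_values_rank by metis
  have strict: "jump_values c ! i < jump_values c ! j" if ij: "i < j" "j < card ?T" for i j
  proof -
    obtain x where x: "x \<in> ?T" "rank ?T x = i" "jump_values c ! i = c ! x"
      using some_jump[of i] ij by auto
    obtain y where y: "y \<in> ?T" "rank ?T y = j" "jump_values c ! j = c ! y"
      using some_jump[of j] ij by auto
    have "x < y" using x(2) y(2) ij rank_mono[of y x ?T] by (metis leI leD)
    then show ?thesis using jumps_strict_mono[OF assms x(1) y(1)] x(3) y(3) by simp
  qed
  have pos: "0 < jump_values c ! r" if "r < card ?T" for r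
    using some_jump[OF that] by (auto simp: jumps_def)
  have "sorted_wrt (<) (jump_values c)" using strict by (simp add: sorted_wrt_iff_nth_less)
  moreover have "\<forall>x \<in> set (jump_values c). 0 < x" using pos by (auto simp: in_set_conv_nth)
  ultimately show ?thesis by simp
qed

lemma staircase_jump_values:
  assumes "sorted c"
  shows "staircase (length c) (jumps c) (jump_values c) = c"
proof -
  let ?T = "jumps c" and ?n = "length c"
  have heights: "(0 # jump_values c) ! rank ?T p = (0 # c) ! p" if "p \<le> ?n" for p
    using that
  proof (induction p)
    case (Suc p)
    show ?case
    proof (cases "p \<in> ?T")
      case True
      then show ?thesis by (simp add: rank_Suc nth_jump_values_rank)
    next
      case False
      have "(0 # c) ! p \<le> (0 # c) ! Suc p"
        using Suc.prems assms by (intro sorted_nth_mono) auto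
      then have "(0 # c) ! Suc p = (0 # c) ! p"
        using False Suc.prems by (auto simp: jumps_def)
      then show ?thesis using False Suc by (simp add: rank_Suc)
    qed
  qed simp
  show ?thesis
  proof (rule nth_equalityI)
    fix i assume "i < length (staircase ?n ?T (jump_values c))"
    then show "staircase ?n ?T (jump_values c) ! i = c ! i"
      using nth_Cons_staircase[of "Suc i" ?n] heights[of "Suc i"] by simp
  qed simp
qed

lemma card_staircase_preimage:
  assumes "T \<subseteq> {..<length c}" and "sorted c"
  shows "card {is. length is = card T \<and> sorted_wrt (<) (0 # is) \<and> staircase (length c) T is = c}
    = of_bool (T = jumps c)"
    (is "card ?S = _")
proof (cases "T = jumps c")
  case True
  then have "jump_values c \<in> ?S"
    using sorted_jump_values staircase_jump_values assms(2) by simp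
  moreover have "is = jump_values c" if "is \<in> ?S" for "is"
  proof (rule staircase_inj[OF assms(1)])
    show "length is = card T" using that by blast
    show "length (jump_values c) = card T" using True by simp
    have "staircase (length c) T is = c" using that by blast
    moreover have "staircase (length c) T (jump_values c) = c" using \<open>jump_values c \<in> ?S\<close> by blast
    ultimately show "staircase (length c) T is = staircase (length c) T (jump_values c)" by simp
  qed
  ultimately have single: "?S = {jump_values c}" by blast
  show ?thesis unfolding single using True by simp
next
  case False
  have "is \<notin> ?S" for "is"
  proof
    assume "is \<in> ?S"
    then have "jumps (staircase (length c) T is) = T" and "staircase (length c) T is = c"
      using jumps_staircase[OF assms(1), of "is"] by simp_all
    then show False using False by simp
  qed
  then have none: "?S = {}" by blast
  show ?thesis unfolding none using False by simp
qed

lemma sorted_mset_eq_iff: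
  assumes "sorted xs" and "sorted ys"
  shows "mset xs = mset ys \<longleftrightarrow> xs = ys"
  using properties_for_sort[of xs ys] sorted_sort_id[OF assms(2)] assms(1) by auto

lemma N_coef_mset:
  assumes "T \<subseteq> {0..<n}" and "sorted c" and "length c = n"
  shows "N_coef n T (mset c) = of_bool (T = jumps c)"
proof -
  have T: "T \<subseteq> {..<n}" using assms(1) by auto
  then have fin: "finite T" by (rule finite_subset) simp
  have "N_mono n T is = mset c \<longleftrightarrow> staircase n T is = c"
    if "sorted_wrt (<) (0 # is)" and "length is = card T" for "is"
  proof -
    have "sorted (staircase n T is)"
      using that by (intro sorted_staircase[OF fin]) (auto dest: strict_sorted_imp_sorted)
    then show ?thesis
      using N_mono_eq_mset_staircase[OF fin T] sorted_mset_eq_iff[OF _ assms(2)] by simp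
  qed
  then have "N_coef n T (mset c)
      = card {is. length is = card T \<and> sorted_wrt (<) (0 # is) \<and> staircase n T is = c}"
    unfolding N_coef_def sorted_wrt.simps(2) by (intro arg_cong[where f = card] Collect_cong) blast
  then show ?thesis using card_staircase_preimage[of T c] T assms(2,3) by simp
qed

lemma N_coef_size_neq:
  assumes "T \<subseteq> {0..<n}" and "size M \<noteq> n"
  shows "N_coef n T M = 0"
proof -
  have T: "T \<subseteq> {..<n}" using assms(1) by auto
  then have "finite T" by (rule finite_subset) simp
  then have "size (N_mono n T is) = n" for "is"
    using T by (simp add: N_mono_eq_mset_staircase)
  then have "N_mono n T is \<noteq> M" for "is" using assms(2) by metis
  then show ?thesis by (simp add: N_coef_def)
qed

lemma L_coef_mset:
  assumes "sorted c" and "length c = n"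
  shows "L_coef n D (mset c) = of_bool (D \<subseteq> jumps c)"
proof -
  have fin: "finite {T. D \<subseteq> T \<and> T \<subseteq> {0..<n}}"
    by (rule finite_subset[of _ "Pow {0..<n}"]) auto
  have "jumps c \<subseteq> {0..<n}" using jumps_subset[of c] assms(2) by auto
  moreover have "L_coef n D (mset c) = (\<Sum>T \<in> {T. D \<subseteq> T \<and> T \<subseteq> {0..<n}}. if T = jumps c then 1 else 0)"
    unfolding L_coef_def by (intro sum.cong refl) (simp add: N_coef_mset[OF _ assms])
  ultimately show ?thesis using sum.delta[OF fin] by simp
qed

section \<open>Lifts of a sorted sequence of absolute values\<close>

definition admissible_step :: "(nat \<Rightarrow> bool) \<Rightarrow> nat \<Rightarrow> nat \<Rightarrow> nat \<Rightarrow> bool" where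
  "admissible_step asc s x y \<longleftrightarrow> x \<le> y \<and> (x = y \<longrightarrow> (even x \<longleftrightarrow> asc s))"

definition admissible :: "(nat \<Rightarrow> bool) \<Rightarrow> nat list \<Rightarrow> bool" where
  "admissible asc a \<longleftrightarrow> (\<forall>s < length a. admissible_step asc s ((0 # a) ! s) (a ! s))"

definition lifts :: "(nat \<Rightarrow> bool) \<Rightarrow> nat list \<Rightarrow> nat list set" where
  "lifts asc c = {a. map zabs a = c \<and> admissible asc a}"

definition peaks :: "(nat \<Rightarrow> bool) \<Rightarrow> nat \<Rightarrow> nat set" where
  "peaks asc n = {i. 0 < i \<and> i < n \<and> asc (i - 1) \<and> \<not> asc i}"

definition liftable :: "(nat \<Rightarrow> bool) \<Rightarrow> nat list \<Rightarrow> bool" where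
  "liftable asc c \<longleftrightarrow> (\<forall>i \<in> peaks asc (length c). i - 1 \<in> jumps c \<or> i \<in> jumps c)
      \<and> (c \<noteq> [] \<and> \<not> asc 0 \<longrightarrow> 0 \<in> jumps c)"

lemma ascent_persists:
  assumes "peaks asc n = {}" and "i \<le> j" and "j < n" and "asc i"
  shows "asc j"
  using assms(2-4)
proof (induction j rule: dec_induct)
  case (step j)
  then have "Suc j \<notin> peaks asc n" using assms(1) by blast
  then show ?case using step by (simp add: peaks_def)
qed

definition cut_points :: "(nat \<Rightarrow> bool) \<Rightarrow> nat \<Rightarrow> nat set" where
  "cut_points asc L = {r. r \<le> L \<and> (\<forall>j. Suc j < L \<longrightarrow> (Suc j < r \<longrightarrow> \<not> asc j) \<and> (r \<le> j \<longrightarrow> asc j))}"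

lemma cut_points_peak_free:
  assumes "peaks asc (L - 1) = {}" and "0 < L"
  obtains m where "cut_points asc L = {m, Suc m}"
proof -
  define m where "m = (LEAST j. L - 1 \<le> j \<or> asc j)"
  have m_le: "m \<le> L - 1" unfolding m_def by (rule Least_le) simp
  have asc_iff: "asc j \<longleftrightarrow> m \<le> j" if "j < L - 1" for j
  proof
    assume "asc j"
    then show "m \<le> j" unfolding m_def by (intro Least_le) simp
  next
    assume "m \<le> j"
    have "L - 1 \<le> m \<or> asc m" unfolding m_def by (rule LeastI[of _ "L - 1"]) simp
    then have "asc m" using \<open>m \<le> j\<close> that by auto
    then show "asc j" by (rule ascent_persists[OF assms(1) \<open>m \<le> j\<close> that])
  qed
  have "cut_points asc L = {m, Suc m}"
  proof (intro equalityI subsetI)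
    fix r assume r: "r \<in> cut_points asc L"
    have "\<not> Suc m < r"
    proof
      assume "Suc m < r"
      then have "\<not> asc m" and "m < L - 1" using r by (auto simp: cut_points_def)
      then show False using asc_iff by simp
    qed
    moreover have "\<not> r < m"
    proof
      assume "r < m"
      then have "asc r" and "r < L - 1" using r m_le by (auto simp: cut_points_def)
      then show False using asc_iff \<open>r < m\<close> by simp
    qed
    ultimately show "r \<in> {m, Suc m}" by auto
  next
    fix r assume "r \<in> {m, Suc m}"
    then show "r \<in> cut_points asc L" using m_le asc_iff assms(2) by (auto simp: cut_points_def)
  qed
  then show ?thesis by (rule that)
qed

lemma cut_points_peak:
  assumes "peaks asc (L - 1) \<noteq> {}"
  shows "cut_points asc L = {}"
proof -
  obtain i where i: "0 < i" "i < L - 1" "asc (i - 1)" "\<not> asc i"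
    using assms by (auto simp: peaks_def)
  have "r \<notin> cut_points asc L" for r
  proof
    assume r: "r \<in> cut_points asc L"
    show False
    proof (cases "r \<le> i")
      case True
      then show False using r i by (auto simp: cut_points_def)
    next
      case False
      then have "Suc (i - 1) < r" and "Suc (i - 1) < L" using i by auto
      then show False using r i by (auto simp: cut_points_def)
    qed
  qed
  then show ?thesis by blast
qed

lemma card_cut_points:
  "0 < L \<Longrightarrow> card (cut_points asc L) = (if peaks asc (L - 1) = {} then 2 else 0)"
  by (metis cut_points_peak_free cut_points_peak card.empty card_2_iff n_not_Suc_n)

lemma zabs_eq_iff: "0 < v \<Longrightarrow> zabs x = v \<longleftrightarrow> x = 2 * v - 1 \<or> x = 2 * v"
  unfolding zabs_def by presburger

lemma sorted_two_valued:
  assumes "sorted t" and "set t \<subseteq> {p, q}" and "p < q"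
  shows "\<exists>r \<le> length t. t = replicate r p @ replicate (length t - r) q"
  using assms(1,2)
proof (induction t)
  case (Cons x t)
  then obtain r where r: "r \<le> length t" "t = replicate r p @ replicate (length t - r) q"
    by auto
  show ?case
  proof (cases "x = p")
    case True
    then show ?thesis using r by (intro exI[of _ "Suc r"]) simp
  next
    case False
    then have "x = q" using Cons.prems(2) by simp
    moreover have "y = q" if "y \<in> set t" for y
    proof -
      have "y \<in> {p, q}" and "q \<le> y" using that Cons.prems \<open>x = q\<close> by auto
      then show ?thesis using assms(3) by auto
    qed
    ultimately have "x # t = replicate (length (x # t)) q"
      by (simp add: replicate_length_same)
    then show ?thesis by (intro exI[of _ 0]) simp
  qed
qed simp

definition block_fillings :: "(nat \<Rightarrow> bool) \<Rightarrow> nat \<Rightarrow> nat \<Rightarrow> nat list set" where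
  "block_fillings asc v L = {t. length t = L \<and> (\<forall>x\<in>set t. zabs x = v)
      \<and> (\<forall>j. Suc j < L \<longrightarrow> admissible_step asc j (t ! j) (t ! Suc j))}"

lemma block_fillings_eq_image:
  assumes "0 < v"
  shows "block_fillings asc v L
    = (\<lambda>r. replicate r (2 * v - 1) @ replicate (L - r) (2 * v)) ` cut_points asc L"
proof -
  define fill where "fill r = replicate r (2 * v - 1) @ replicate (L - r) (2 * v)" for r
  have odd: "odd (2 * v - 1)" using assms by presburger
  have nth_fill: "fill r ! j = (if j < r then 2 * v - 1 else 2 * v)" if "r \<le> L" "j < L" for r j
    using that by (simp add: fill_def nth_append)
  have step_fill: "admissible_step asc j (fill r ! j) (fill r ! Suc j)
      \<longleftrightarrow> (Suc j < r \<longrightarrow> \<not> asc j) \<and> (r \<le> j \<longrightarrow> asc j)" if "r \<le> L" "Suc j < L" for r j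
    using that odd assms by (auto simp: nth_fill admissible_step_def)
  have "block_fillings asc v L = fill ` cut_points asc L"
  proof (intro equalityI subsetI)
    fix t assume t: "t \<in> block_fillings asc v L"
    then have "set t \<subseteq> {2 * v - 1, 2 * v}" and "length t = L"
      using zabs_eq_iff[OF assms] by (auto simp: block_fillings_def)
    moreover have "sorted t"
      using t by (auto simp: block_fillings_def sorted_iff_nth_Suc admissible_step_def)
    moreover have "2 * v - 1 < 2 * v" using assms by simp
    ultimately obtain r where "r \<le> L" and "t = fill r"
      using sorted_two_valued[of t "2 * v - 1" "2 * v"] unfolding fill_def by blast
    then show "t \<in> fill ` cut_points asc L"
      using t step_fill by (auto simp: block_fillings_def cut_points_def)
  next
    fix t assume "t \<in> fill ` cut_points asc L"
    then obtain r where r: "r \<in> cut_points asc L" and t: "t = fill r" by blast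
    have "set t \<subseteq> {2 * v - 1, 2 * v}" by (auto simp: t fill_def)
    then show "t \<in> block_fillings asc v L"
      using r step_fill zabs_eq_iff[OF assms]
      by (auto simp: block_fillings_def cut_points_def t fill_def)
  qed
  then show ?thesis by (simp add: fill_def)
qed

lemma card_block_fillings:
  assumes "0 < v" and "0 < L"
  shows "card (block_fillings asc v L) = (if peaks asc (L - 1) = {} then 2 else 0)"
proof -
  let ?fill = "\<lambda>r. replicate r (2 * v - 1) @ replicate (L - r) (2 * v)"
  have "length (filter (\<lambda>x. x = 2 * v - 1) (?fill r)) = r" if "r \<le> L" for r
    using that assms(1) by (auto simp: filter_empty_conv)
  then have "inj_on ?fill (cut_points asc L)"
    by (intro inj_onI) (metis (no_types, lifting) cut_points_def mem_Collect_eq)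
  then show ?thesis
    using card_cut_points[OF assms(2)] by (simp add: block_fillings_eq_image[OF assms(1)] card_image)
qed

lemma nth_Cons_append_low: "s \<le> length a \<Longrightarrow> (x # a @ t) ! s = (x # a) ! s"
  by (cases s) (auto simp: nth_append)

lemma nth_Cons_append_high: "(x # a @ t) ! (length a + j) = (last (x # a) # t) ! j"
  by (induction a arbitrary: x) auto

lemma all_less_add_iff: "(\<forall>s < m + (k::nat). P s) \<longleftrightarrow> (\<forall>s < m. P s) \<and> (\<forall>j < k. P (m + j))"
  by (induction k) (auto simp: All_less_Suc)

lemma admissible_append:
  "admissible asc (a @ t) \<longleftrightarrow> admissible asc a
    \<and> (\<forall>j < length t. admissible_step asc (length a + j) ((last (0 # a) # t) ! j) (t ! j))"
  unfolding admissible_def length_append all_less_add_iff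
  by (simp add: nth_Cons_append_low nth_Cons_append_high nth_append)

lemma jumps_append:
  "jumps (a @ t) = jumps a \<union> (\<lambda>j. length a + j) ` {j. j < length t \<and> (last (0 # a) # t) ! j < t ! j}"
proof (intro set_eqI)
  fix s
  show "s \<in> jumps (a @ t) \<longleftrightarrow>
      s \<in> jumps a \<union> (\<lambda>j. length a + j) ` {j. j < length t \<and> (last (0 # a) # t) ! j < t ! j}"
  proof (cases "s < length a")
    case True
    then show ?thesis by (auto simp: jumps_def nth_Cons_append_low nth_append)
  next
    case False
    then obtain j where s: "s = length a + j" by (metis le_add_diff_inverse not_less)
    then have "s \<notin> jumps a" using jumps_subset[of a] by auto
    then show ?thesis by (auto simp: s jumps_def nth_Cons_append_high nth_append)
  qed
qed

lemma zabs_less_imp_less: "zabs x < zabs y \<Longrightarrow> x < y"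
  unfolding zabs_def by (metis div_le_mono leI add_le_mono1 leD)

lemma zabs_last_Cons_0_less:
  assumes "\<forall>x\<in>set a. zabs x < v" and "0 < v"
  shows "zabs (last (0 # a)) < v"
  using assms by (cases "a = []") (simp_all add: zabs_def)

lemma jumps_append_block:
  assumes "\<forall>x\<in>set cp. x < v" and "0 < v" and "0 < L"
  shows "jumps (cp @ replicate L v) = insert (length cp) (jumps cp)"
proof -
  have "last (0 # cp) < v"
    using assms(1,2) by (cases cp) auto
  then have "{j. j < L \<and> (last (0 # cp) # replicate L v) ! j < replicate L v ! j} = {0}"
    using assms(3) by (auto simp: nth_Cons')
  then show ?thesis by (simp add: jumps_append)
qed

lemma map_eq_replicate_iff: "map f xs = replicate n y \<longleftrightarrow> length xs = n \<and> (\<forall>x\<in>set xs. f x = y)"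
proof
  assume "map f xs = replicate n y"
  then show "length xs = n \<and> (\<forall>x\<in>set xs. f x = y)"
    by (metis in_set_replicate length_map length_replicate list.set_map imageI)
next
  assume "length xs = n \<and> (\<forall>x\<in>set xs. f x = y)"
  then have "map f xs = map (\<lambda>_. y) xs" and "length xs = n" by auto
  then show "map f xs = replicate n y" by (simp add: map_replicate_const)
qed

lemma admissible_append_block:
  assumes "\<forall>x\<in>set a. zabs x < v" and "0 < v" and "t \<noteq> []" and "\<forall>x\<in>set t. zabs x = v"
  shows "admissible asc (a @ t) \<longleftrightarrow> admissible asc a
    \<and> (\<forall>j. Suc j < length t \<longrightarrow> admissible_step asc (Suc (length a + j)) (t ! j) (t ! Suc j))"
proof -
  obtain L where L: "length t = Suc L" using assms(3) by (cases t) auto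
  have "zabs (last (0 # a)) < zabs (t ! 0)"
    using zabs_last_Cons_0_less[OF assms(1,2)] assms(4) L by simp
  then have "admissible_step asc (length a) (last (0 # a)) (t ! 0)"
    by (auto simp: admissible_step_def dest: zabs_less_imp_less)
  then show ?thesis using L by (simp add: admissible_append All_less_Suc2)
qed

lemma lifts_append_block:
  assumes "\<forall>x\<in>set cp. x < v" and "0 < v" and "0 < L"
  shows "lifts asc (cp @ replicate L v)
    = (\<lambda>(a, t). a @ t) ` (lifts asc cp \<times> block_fillings (\<lambda>j. asc (Suc (length cp + j))) v L)"
    (is "_ = _ ` (_ \<times> ?B)")
proof (intro equalityI subsetI)
  fix b assume "b \<in> lifts asc (cp @ replicate L v)"
  then have b: "map zabs b = cp @ replicate L v" "admissible asc b" by (auto simp: lifts_def)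
  then obtain a t where "b = a @ t" "map zabs a = cp" "map zabs t = replicate L v"
    by (auto simp: map_eq_append_conv)
  moreover from this have "length t = L" "\<forall>x\<in>set t. zabs x = v"
    by (auto simp: map_eq_replicate_iff)
  ultimately show "b \<in> (\<lambda>(a, t). a @ t) ` (lifts asc cp \<times> ?B)"
    using b(2) admissible_append_block[of a v t asc] assms
    by (auto simp: lifts_def block_fillings_def admissible_step_def)
next
  fix b assume "b \<in> (\<lambda>(a, t). a @ t) ` (lifts asc cp \<times> ?B)"
  then obtain a t where b: "b = a @ t" and a: "a \<in> lifts asc cp" and t: "t \<in> ?B" by auto
  have a': "map zabs a = cp" "admissible asc a" using a by (simp_all add: lifts_def)
  have t': "length t = L" "\<forall>x\<in>set t. zabs x = v"
    "\<forall>j. Suc j < L \<longrightarrow> admissible_step asc (Suc (length cp + j)) (t ! j) (t ! Suc j)"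
    using t by (simp_all add: block_fillings_def admissible_step_def)
  have "map zabs b = cp @ replicate L v" using a' t' by (simp add: b map_eq_replicate_iff)
  moreover have "admissible asc b"
    using a' t' admissible_append_block[of a v t asc] assms by (auto simp: b)
  ultimately show "b \<in> lifts asc (cp @ replicate L v)" by (simp add: lifts_def)
qed

lemma card_lifts_append_block:
  assumes "\<forall>x\<in>set cp. x < v" and "0 < v" and "0 < L"
  shows "card (lifts asc (cp @ replicate L v))
    = card (lifts asc cp) * card (block_fillings (\<lambda>j. asc (Suc (length cp + j))) v L)"
proof -
  let ?B = "block_fillings (\<lambda>j. asc (Suc (length cp + j))) v L"
  have "inj_on (\<lambda>(a, t). a @ t) (lifts asc cp \<times> ?B)"
  proof (rule inj_onI)
    fix x y assume "x \<in> lifts asc cp \<times> ?B" "y \<in> lifts asc cp \<times> ?B"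
      and eq: "(\<lambda>(a, t). a @ t) x = (\<lambda>(a, t). a @ t) y"
    then have "snd x \<in> ?B" and "snd y \<in> ?B" by (simp_all add: mem_Times_iff)
    then have "length (snd x) = length (snd y)" by (simp add: block_fillings_def)
    with eq show "x = y" by (cases x, cases y) simp
  qed
  then show ?thesis
    by (simp add: lifts_append_block[OF assms] card_image card_cartesian_product)
qed

lemma peaks_covered_append:
  assumes "J \<subseteq> {..<k}"
  shows "(\<forall>i \<in> peaks asc (k + L). i - 1 \<in> insert k J \<or> i \<in> insert k J)
    \<longleftrightarrow> (\<forall>i \<in> peaks asc k. i - 1 \<in> J \<or> i \<in> J) \<and> peaks (\<lambda>j. asc (Suc (k + j))) (L - 1) = {}"
proof -
  have peaks_low: "i \<in> peaks asc (k + L) \<longleftrightarrow> i \<in> peaks asc k" if "i < k" for i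
    using that by (auto simp: peaks_def)
  have peaks_high: "i \<in> peaks (\<lambda>j. asc (Suc (k + j))) (L - 1) \<longleftrightarrow> 0 < i \<and> Suc (k + i) \<in> peaks asc (k + L)"
    for i by (cases i) (auto simp: peaks_def)
  have "i < k \<or> i = k \<or> i = Suc k \<or> (0 < i - Suc k \<and> i = Suc (k + (i - Suc k)))" for i :: nat
    by arith
  then have cases: "i < k \<or> i = k \<or> i = Suc k \<or> (\<exists>j. 0 < j \<and> i = Suc (k + j))" for i
    by blast
  show ?thesis
  proof (intro iffI conjI)
    assume all: "\<forall>i \<in> peaks asc (k + L). i - 1 \<in> insert k J \<or> i \<in> insert k J"
    show "\<forall>i \<in> peaks asc k. i - 1 \<in> J \<or> i \<in> J"
    proof
      fix i assume i: "i \<in> peaks asc k"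
      then have "i < k" by (simp add: peaks_def)
      then have "i \<in> peaks asc (k + L)" using peaks_low i by simp
      then have "i - 1 \<in> insert k J \<or> i \<in> insert k J" using all by blast
      then show "i - 1 \<in> J \<or> i \<in> J" using \<open>i < k\<close> by auto
    qed
    have "i \<notin> peaks (\<lambda>j. asc (Suc (k + j))) (L - 1)" for i
    proof
      assume "i \<in> peaks (\<lambda>j. asc (Suc (k + j))) (L - 1)"
      then have "Suc (k + i) \<in> peaks asc (k + L)" and "0 < i" using peaks_high by auto
      then show False using all assms by fastforce
    qed
    then show "peaks (\<lambda>j. asc (Suc (k + j))) (L - 1) = {}" by blast
  next
    assume "(\<forall>i \<in> peaks asc k. i - 1 \<in> J \<or> i \<in> J) \<and> peaks (\<lambda>j. asc (Suc (k + j))) (L - 1) = {}"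
    then have low: "\<forall>i \<in> peaks asc k. i - 1 \<in> J \<or> i \<in> J"
      and high: "peaks (\<lambda>j. asc (Suc (k + j))) (L - 1) = {}" by blast+
    show "\<forall>i \<in> peaks asc (k + L). i - 1 \<in> insert k J \<or> i \<in> insert k J"
    proof
      fix i assume i: "i \<in> peaks asc (k + L)"
      consider "i < k" | "i = k \<or> i = Suc k" | j where "0 < j" "i = Suc (k + j)"
        using cases by blast
      then show "i - 1 \<in> insert k J \<or> i \<in> insert k J"
      proof cases
        case 1
        then show ?thesis using i low peaks_low[OF 1] by blast
      next
        case 2
        then show ?thesis by auto
      next
        case 3
        then show ?thesis using i high peaks_high[of j] by auto
      qed
    qed
  qed
qed

lemma liftable_append_block:
  assumes "\<forall>x\<in>set cp. x < v" and "0 < v" and "0 < L"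
  shows "liftable asc (cp @ replicate L v)
    \<longleftrightarrow> liftable asc cp \<and> peaks (\<lambda>j. asc (Suc (length cp + j))) (L - 1) = {}"
proof -
  have J: "jumps (cp @ replicate L v) = insert (length cp) (jumps cp)"
    by (rule jumps_append_block[OF assms])
  have "(cp @ replicate L v \<noteq> [] \<and> \<not> asc 0 \<longrightarrow> 0 \<in> insert (length cp) (jumps cp))
      \<longleftrightarrow> (cp \<noteq> [] \<and> \<not> asc 0 \<longrightarrow> 0 \<in> jumps cp)"
    by (cases cp) auto
  then show ?thesis
    using peaks_covered_append[OF jumps_subset[of cp], of asc L] unfolding liftable_def J
    by auto
qed

lemma jumps_replicate_0: "jumps (replicate L 0) = {}"
  by (auto simp: jumps_def nth_Cons')

lemma admissible_replicate_0: "admissible asc (replicate L 0) \<longleftrightarrow> (\<forall>s < L. asc s)"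
  by (simp add: admissible_def admissible_step_def flip: replicate_Suc)

lemma liftable_replicate_0: "liftable asc (replicate L 0) \<longleftrightarrow> (\<forall>s < L. asc s)"
proof
  assume "liftable asc (replicate L 0)"
  then have "peaks asc L = {}" and "0 < L \<longrightarrow> asc 0"
    by (auto simp: liftable_def jumps_replicate_0)
  then show "\<forall>s < L. asc s" using ascent_persists[of asc L 0] by blast
qed (auto simp: liftable_def peaks_def)

lemma card_lifts_replicate_0:
  "card (lifts asc (replicate L 0))
    = (if liftable asc (replicate L 0) then 2 ^ card (jumps (replicate L 0)) else 0)"
proof -
  have "zabs x = 0 \<longleftrightarrow> x = 0" for x unfolding zabs_def by presburger
  then have "map zabs a = replicate L 0 \<longleftrightarrow> a = replicate L 0" for a
    by (simp add: map_eq_replicate_iff) (metis in_set_replicate length_replicate replicate_length_same)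
  then have "lifts asc (replicate L 0) = (if \<forall>s < L. asc s then {replicate L 0} else {})"
    by (auto simp: lifts_def admissible_replicate_0)
  then show ?thesis by (simp add: liftable_replicate_0 jumps_replicate_0)
qed

lemma sorted_last_block:
  assumes "sorted c" and "c \<noteq> []"
  shows "\<exists>cp L. c = cp @ replicate L (last c) \<and> 0 < L \<and> (\<forall>x\<in>set cp. x < last c)"
  using assms
proof (induction c rule: rev_induct)
  case (snoc x c)
  show ?case
  proof (cases "c = []")
    case False
    then obtain cp L where c: "c = cp @ replicate L (last c)" "0 < L" "\<forall>y\<in>set cp. y < last c"
      using snoc by (auto simp: sorted_append)
    have "last c \<le> x" using snoc.prems(1) False by (simp add: sorted_append)
    show ?thesis
    proof (cases "last c = x")
      case True
      with c(1) have "c @ [x] = cp @ replicate L x @ [x]" by (metis append_assoc)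
      also have "\<dots> = cp @ replicate (Suc L) x" by (simp add: replicate_append_same)
      finally have "c @ [x] = cp @ replicate (Suc L) x" .
      then show ?thesis using c(3) True by (intro exI[of _ cp] exI[of _ "Suc L"]) simp
    next
      case False
      have "set c = set cp \<union> {last c}" using arg_cong[where f = set, OF c(1)] c(2) by simp
      then have "\<forall>y\<in>set c. y < x" using c(3) \<open>last c \<le> x\<close> False by auto
      then show ?thesis by (intro exI[of _ c] exI[of _ 1]) simp
    qed
  qed (intro exI[of _ "[]"] exI[of _ 1], simp)
qed simp

theorem card_lifts:
  "sorted c \<Longrightarrow> card (lifts asc c) = (if liftable asc c then 2 ^ card (jumps c) else 0)"
proof (induction "length c" arbitrary: c rule: less_induct)
  case less
  show ?case
  proof (cases "c = []")
    case True
    then show ?thesis using card_lifts_replicate_0[of asc 0] by simp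
  next
    case False
    then obtain cp L where c: "c = cp @ replicate L (last c)" "0 < L" "\<forall>x\<in>set cp. x < last c"
      using sorted_last_block[OF less.prems] by blast
    show ?thesis
    proof (cases "last c = 0")
      case True
      then have "c = replicate L 0" using c by auto
      then show ?thesis using card_lifts_replicate_0 by simp
    next
      case False
      let ?B = "block_fillings (\<lambda>j. asc (Suc (length cp + j))) (last c) L"
      have "sorted cp" using less.prems c(1) by (metis sorted_append)
      moreover have "length cp < length c"
        using c by (metis length_append length_replicate less_add_same_cancel1)
      ultimately have IH: "card (lifts asc cp) = (if liftable asc cp then 2 ^ card (jumps cp) else 0)"
        using less.hyps by blast
      have "jumps c = insert (length cp) (jumps cp)" and "length cp \<notin> jumps cp"
        using jumps_append_block[OF c(3) _ c(2)] jumps_subset[of cp] False c(1) by auto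
      then have "card (jumps c) = Suc (card (jumps cp))"
        using finite_jumps by simp
      moreover have "card (lifts asc c) = card (lifts asc cp) * card ?B"
        using card_lifts_append_block[OF c(3) _ c(2)] False c(1) by simp
      moreover have "liftable asc c \<longleftrightarrow> liftable asc cp \<and> peaks (\<lambda>j. asc (Suc (length cp + j))) (L - 1) = {}"
        using liftable_append_block[OF c(3) _ c(2)] False c(1) by simp
      ultimately show ?thesis
        using IH card_block_fillings[OF _ c(2)] False by simp
    qed
  qed
qed

section \<open>Parity constraints from peaks\<close>

lemma odd_card_Int_doubleton:
  assumes "a \<noteq> b"
  shows "odd (card (D \<inter> {a, b})) \<longleftrightarrow> (b \<in> D) \<noteq> (a \<in> D)"
  using assms by (cases "a \<in> D"; cases "b \<in> D") (auto simp: Int_insert_right)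

definition peak_constraints :: "(nat \<Rightarrow> bool) \<Rightarrow> nat \<Rightarrow> nat set set" where
  "peak_constraints asc n = (\<lambda>i. {i - 1, i}) ` peaks asc n \<union> (if asc 0 then {} else {{0}})"

lemma peaks_pos: "i \<in> peaks asc n \<Longrightarrow> 0 < i"
  by (simp add: peaks_def)

lemma peaks_not_adjacent: "i \<in> peaks asc n \<Longrightarrow> j \<in> peaks asc n \<Longrightarrow> i - 1 \<noteq> j"
  by (auto simp: peaks_def)

lemma pairwise_disjnt_peak_constraints: "pairwise disjnt (peak_constraints asc n)"
proof (rule pairwiseI)
  let ?P = "peaks asc n"
  have pair_pair: "disjnt {i - 1, i} {j - 1, j}" if "i \<in> ?P" "j \<in> ?P" "i \<noteq> j" for i j
    using that peaks_pos[OF that(1)] peaks_pos[OF that(2)]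
      peaks_not_adjacent[OF that(1,2)] peaks_not_adjacent[OF that(2,1)]
    by (auto simp: disjnt_def)
  have pair_zero: "disjnt {i - 1, i} {0}" if "i \<in> ?P" "\<not> asc 0" for i
    using that by (auto simp: disjnt_def peaks_def)
  fix S S' assume "S \<in> peak_constraints asc n" and "S' \<in> peak_constraints asc n" and "S \<noteq> S'"
  then consider i j where "i \<in> ?P" "j \<in> ?P" "i \<noteq> j" "S = {i - 1, i}" "S' = {j - 1, j}"
    | i where "i \<in> ?P" "\<not> asc 0" "S = {i - 1, i}" "S' = {0}"
    | i where "i \<in> ?P" "\<not> asc 0" "S = {0}" "S' = {i - 1, i}"
    unfolding peak_constraints_def by (auto split: if_splits)
  then show "disjnt S S'"
    by cases (use pair_pair pair_zero disjnt_sym in metis)+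
qed

lemma card_peak_constraints:
  "card (peak_constraints asc n) = card (peaks asc n) + of_bool (\<not> asc 0)"
proof -
  have "inj_on (\<lambda>i. {i - 1, i}) (peaks asc n)"
  proof (rule inj_onI)
    fix i j assume "i \<in> peaks asc n" "j \<in> peaks asc n" "{i - 1, i} = {j - 1, j}"
    then show "i = j" using peaks_pos[of i] peaks_pos[of j] by (auto simp: doubleton_eq_iff)
  qed
  moreover have "{0} \<notin> (\<lambda>i. {i - 1, i}) ` peaks asc n"
    using peaks_pos by (auto simp: doubleton_eq_iff)
  ultimately show ?thesis
    by (auto simp: peak_constraints_def card_image peaks_def)
qed

lemma odd_card_peak_constraints:
  "(\<forall>S \<in> peak_constraints asc n. odd (card (D \<inter> S)))
    \<longleftrightarrow> (\<forall>i \<in> peaks asc n. (i \<in> D) \<noteq> (i - 1 \<in> D)) \<and> (\<not> asc 0 \<longrightarrow> 0 \<in> D)"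
proof -
  have "odd (card (D \<inter> {i - 1, i})) \<longleftrightarrow> (i \<in> D) \<noteq> (i - 1 \<in> D)" if "i \<in> peaks asc n" for i
    using odd_card_Int_doubleton[of "i - 1" i D] peaks_pos[OF that] by simp
  moreover have "odd (card (D \<inter> {0})) \<longleftrightarrow> 0 \<in> D"
    by (cases "0 \<in> D") auto
  moreover have "(\<forall>S \<in> peak_constraints asc n. odd (card (D \<inter> S)))
      \<longleftrightarrow> (\<forall>i \<in> peaks asc n. odd (card (D \<inter> {i - 1, i}))) \<and> (\<not> asc 0 \<longrightarrow> odd (card (D \<inter> {0})))"
    by (auto simp: peak_constraints_def)
  ultimately show ?thesis by simp
qed

lemma card_peak_splitting_subsets:
  assumes "finite J"
  shows "2 ^ (card (peaks asc n) + of_bool (\<not> asc 0))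
      * card {D. D \<subseteq> J \<and> (\<forall>i \<in> peaks asc n. (i \<in> D) \<noteq> (i - 1 \<in> D)) \<and> (\<not> asc 0 \<longrightarrow> 0 \<in> D)}
    = (if (\<forall>i \<in> peaks asc n. i - 1 \<in> J \<or> i \<in> J) \<and> (\<not> asc 0 \<longrightarrow> 0 \<in> J) then 2 ^ card J else 0)"
proof -
  have "finite (peak_constraints asc n)"
    by (simp add: peak_constraints_def peaks_def)
  moreover have "(\<forall>S \<in> peak_constraints asc n. S \<inter> J \<noteq> {})
      \<longleftrightarrow> (\<forall>i \<in> peaks asc n. i - 1 \<in> J \<or> i \<in> J) \<and> (\<not> asc 0 \<longrightarrow> 0 \<in> J)"
    by (auto simp: peak_constraints_def)
  ultimately show ?thesis
    using card_subsets_odd_intersections[OF assms _ pairwise_disjnt_peak_constraints]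
    unfolding card_peak_constraints odd_card_peak_constraints by simp
qed

section \<open>Signed permutations\<close>

definition ascent :: "(int \<Rightarrow> int) \<Rightarrow> nat \<Rightarrow> bool" where
  "ascent \<pi> s \<longleftrightarrow> \<pi> (int s) < \<pi> (int s + 1)"

lemma signed_perm_step_neq:
  assumes "signed_perm n \<pi>" and "s < n"
  shows "\<pi> (int s) \<noteq> \<pi> (int s + 1)"
proof -
  have "inj_on \<pi> {- int n..int n}"
    using assms(1) by (simp add: signed_perm_def bij_betw_def)
  moreover have "int s \<in> {- int n..int n}" and "int s + 1 \<in> {- int n..int n}"
    using assms(2) by auto
  ultimately show ?thesis by (metis inj_on_eq_iff add_cancel_left_right one_neq_zero)
qed

lemma signed_perm_0: "signed_perm n \<pi> \<Longrightarrow> \<pi> 0 = 0"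
  unfolding signed_perm_def by (metis add.inverse_neutral neg_equal_zero)

lemma dB_seqs_eq:
  assumes "signed_perm n \<pi>"
  shows "dB_seqs n \<pi> = {a. length a = n \<and> admissible (ascent \<pi>) a}"
proof (intro set_eqI)
  fix a :: "nat list"
  have step: "x \<le> y \<and> (\<pi> (int s) < \<pi> (int s + 1) \<longrightarrow> x < y \<or> x = y \<and> plus_type x)
      \<and> (\<pi> (int s + 1) < \<pi> (int s) \<longrightarrow> x < y \<or> x = y \<and> minus_type x)
      \<longleftrightarrow> admissible_step (ascent \<pi>) s x y" if "s < n" for s x y
    using signed_perm_step_neq[OF assms that]
    by (auto simp: admissible_step_def ascent_def plus_type_def minus_type_def)
  have "a \<in> dB_seqs n \<pi> \<longleftrightarrow> length a = n \<and> (\<forall>s < n. (0 # a) ! s \<le> a ! s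
      \<and> (\<pi> (int s) < \<pi> (int s + 1) \<longrightarrow> (0 # a) ! s < a ! s \<or> (0 # a) ! s = a ! s \<and> plus_type ((0 # a) ! s))
      \<and> (\<pi> (int s + 1) < \<pi> (int s) \<longrightarrow> (0 # a) ! s < a ! s \<or> (0 # a) ! s = a ! s \<and> minus_type ((0 # a) ! s)))"
    by (auto simp: dB_seqs_def Let_def)
  also have "\<dots> \<longleftrightarrow> a \<in> {a. length a = n \<and> admissible (ascent \<pi>) a}"
    using step by (auto simp: admissible_def)
  finally show "a \<in> dB_seqs n \<pi> \<longleftrightarrow> a \<in> {a. length a = n \<and> admissible (ascent \<pi>) a}" .
qed

lemma PeB_eq_peaks:
  assumes "signed_perm n \<pi>"
  shows "PeB n \<pi> = peaks (ascent \<pi>) n"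
proof -
  have "\<pi> (int i) > \<pi> (int i + 1) \<longleftrightarrow> \<not> ascent \<pi> i" if "i < n" for i
    using signed_perm_step_neq[OF assms that] by (auto simp: ascent_def)
  moreover have "ascent \<pi> (i - 1) \<longleftrightarrow> \<pi> (int i - 1) < \<pi> (int i)" if "0 < i" for i
    using that by (simp add: ascent_def of_nat_diff)
  ultimately show ?thesis by (auto simp: PeB_def peaks_def)
qed

lemma ascent_0_iff:
  assumes "signed_perm n \<pi>" and "0 < n"
  shows "\<not> ascent \<pi> 0 \<longleftrightarrow> \<pi> 1 < 0"
  using signed_perm_step_neq[OF assms] signed_perm_0[OF assms(1)] by (auto simp: ascent_def)

lemma sorted_admissible: "admissible asc a \<Longrightarrow> sorted a"
  unfolding sorted_iff_nth_Suc admissible_def admissible_step_def by (metis Suc_lessD nth_Cons_Suc)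

lemma dB_coef_mset:
  assumes "signed_perm n \<pi>" and "sorted c" and "length c = n"
  shows "dB_coef n \<pi> (mset c) = card (lifts (ascent \<pi>) c)"
proof -
  have "sorted (map zabs a)" if "admissible (ascent \<pi>) a" for a
    using sorted_admissible[OF that] unfolding zabs_def
    by (intro sorted_map_mono) (auto intro: mono_onI div_le_mono)
  then have "mset (map zabs a) = mset c \<longleftrightarrow> map zabs a = c" if "admissible (ascent \<pi>) a" for a
    using that sorted_mset_eq_iff[OF _ assms(2)] by blast
  then have "{a \<in> dB_seqs n \<pi>. mset (map zabs a) = mset c} = lifts (ascent \<pi>) c"
    using assms(3) by (auto simp: dB_seqs_eq[OF assms(1)] lifts_def simp del: mset_map)
  then show ?thesis by (simp add: dB_coef_def)
qed

lemma dB_coef_size_neq: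
  assumes "size M \<noteq> n"
  shows "dB_coef n \<pi> M = 0"
proof -
  have "mset (map zabs a) \<noteq> M" if "a \<in> dB_seqs n \<pi>" for a
    using that assms by (auto simp: dB_seqs_def)
  then have none: "{a \<in> dB_seqs n \<pi>. mset (map zabs a) = M} = {}" by blast
  show ?thesis unfolding dB_coef_def none by simp
qed

lemma Suc_image_iff: "0 < i \<Longrightarrow> i \<in> Suc ` D \<longleftrightarrow> i - 1 \<in> D"
  by (cases i) auto

lemma weighted_sum_L_coef_mset:
  assumes "signed_perm n \<pi>" and "0 < n" and "sorted c" and "length c = n"
  shows "2 ^ (peB n \<pi> + varsigma \<pi>) *
      (\<Sum>D \<in> {D. D \<subseteq> {0..<n} \<and> PeB n \<pi> \<subseteq> symdiff D (Suc ` D) \<and> (\<pi> 1 < 0 \<longrightarrow> 0 \<in> D)}. L_coef n D (mset c))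
    = (if liftable (ascent \<pi>) c then 2 ^ card (jumps c) else 0)"
proof -
  let ?P = "peaks (ascent \<pi>) n" and ?J = "jumps c"
  let ?DD = "{D. D \<subseteq> {0..<n} \<and> PeB n \<pi> \<subseteq> symdiff D (Suc ` D) \<and> (\<pi> 1 < 0 \<longrightarrow> 0 \<in> D)}"
  have J: "?J \<subseteq> {0..<n}" using jumps_subset[of c] assms(4) by auto
  have "finite ?DD" by (rule finite_subset[of _ "Pow {0..<n}"]) auto
  then have "(\<Sum>D \<in> ?DD. L_coef n D (mset c)) = card (?DD \<inter> {D. D \<subseteq> ?J})"
    by (simp add: L_coef_mset[OF assms(3,4)] sum_of_bool_eq)
  also have "?DD \<inter> {D. D \<subseteq> ?J}
      = {D. D \<subseteq> ?J \<and> (\<forall>i \<in> ?P. (i \<in> D) \<noteq> (i - 1 \<in> D)) \<and> (\<not> ascent \<pi> 0 \<longrightarrow> 0 \<in> D)}"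
    using J ascent_0_iff[OF assms(1,2)] Suc_image_iff
    by (auto simp: PeB_eq_peaks[OF assms(1)] symdiff_def peaks_def)
  finally have "2 ^ (peB n \<pi> + varsigma \<pi>) * (\<Sum>D \<in> ?DD. L_coef n D (mset c))
      = 2 ^ (card ?P + of_bool (\<not> ascent \<pi> 0))
        * card {D. D \<subseteq> ?J \<and> (\<forall>i \<in> ?P. (i \<in> D) \<noteq> (i - 1 \<in> D)) \<and> (\<not> ascent \<pi> 0 \<longrightarrow> 0 \<in> D)}"
    using ascent_0_iff[OF assms(1,2)]
    by (simp add: peB_def PeB_eq_peaks[OF assms(1)] varsigma_def)
  also have "\<dots> = (if liftable (ascent \<pi>) c then 2 ^ card ?J else 0)"
    using card_peak_splitting_subsets[OF finite_jumps] assms(2,4)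
    by (simp add: liftable_def length_greater_0_conv[symmetric])
  finally show ?thesis .
qed

lemma dB_coef_eq_weighted_sum_L_coef:
  assumes "0 < n" and "signed_perm n \<pi>"
  shows "dB_coef n \<pi> M = 2 ^ (peB n \<pi> + varsigma \<pi>) *
     (\<Sum>D \<in> {D. D \<subseteq> {0..<n} \<and> PeB n \<pi> \<subseteq> symdiff D (Suc ` D) \<and> (\<pi> 1 < 0 \<longrightarrow> 0 \<in> D)}. L_coef n D M)"
proof (cases "size M = n")
  case True
  then obtain c where "M = mset c" and "sorted c" and "length c = n"
    by (metis mset_sorted_list_of_multiset size_mset sorted_sorted_list_of_multiset)
  then show ?thesis
    using dB_coef_mset[OF assms(2)] card_lifts weighted_sum_L_coef_mset[OF assms(2,1)] by simp
next
  case False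
  then show ?thesis by (simp add: dB_coef_size_neq N_coef_size_neq L_coef_def)
qed

theorem theorem6p6:
  fixes n :: nat and \<pi> :: "int \<Rightarrow> int"
  assumes "1 \<le> n" and "signed_perm n \<pi>"
  shows "\<forall>M :: monomial. dB_coef n \<pi> M =
     2 ^ (peB n \<pi> + varsigma \<pi>) *
     (\<Sum>D \<in> {D. D \<subseteq> {0..<n} \<and> PeB n \<pi> \<subseteq> symdiff D (Suc ` D)
                 \<and> (\<pi> 1 < 0 \<longrightarrow> 0 \<in> D)}. L_coef n D M)"
  using dB_coef_eq_weighted_sum_L_coef assms by simp

end
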